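(* The greedy algorithm Degree (with $r=1$) is not an approximation algorithm for Minimum Congestion Dominating Set: for every real $c\ge 1$ there exist a graph $G$ and an execution of Degree on $G$ (i.e., a choice of tie-breaking) whose output $D$ satisfies $\overline{\mathrm{cong}}(D)>c\cdot\mathrm{mac}(G)$. In fact, for every $k\ge 2$, on the graph obtained from the complete bipartite graph $K_{k,k}$ with sides $A,B$ by attaching one pendant leaf to each vertex of $A\cup B$ (so $n=4k$), some execution outputs $D=A\cup B$ with $\overline{\mathrm{cong}}(D)=n/8+1$, while $\mathrm{mac}(G)=1$.
   Context: For $r=1$: a dominating set of $G=(V,E)$ is $D\subseteq V$ with $N[D]=V$ ($N[\cdot]$ closed neighborhood). The average congestion of $S$ is $\overline{\mathrm{cong}}(S)=\frac{1}{|V|}\sum_{x\in V}|N[x]\cap S|$ and $\mathrm{mac}(G)$ is its minimum over dominating sets. The algorithm Degree starts with $D=\emptyset$ and, while $N[D]\ne V$, adds to $D$ a vertex $v$ maximizing $|N[v]\setminus N[D]|$, breaking ties arbitrarily; it outputs $D$. *)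

theory Defs
  imports Complex_Main
begin

definition graph :: "'a set \<Rightarrow> ('a \<Rightarrow> 'a \<Rightarrow> bool) \<Rightarrow> bool" where
  "graph V E \<longleftrightarrow> finite V \<and> (\<forall>x y. E x y \<longrightarrow> x \<in> V \<and> y \<in> V)
     \<and> (\<forall>x y. E x y \<longrightarrow> E y x) \<and> (\<forall>x. \<not> E x x)"

definition cnbhd :: "'a set \<Rightarrow> ('a \<Rightarrow> 'a \<Rightarrow> bool) \<Rightarrow> 'a \<Rightarrow> 'a set" where
  "cnbhd V E x = {y \<in> V. y = x \<or> E x y}"

definition cnbhd_set :: "'a set \<Rightarrow> ('a \<Rightarrow> 'a \<Rightarrow> bool) \<Rightarrow> 'a set \<Rightarrow> 'a set" where
  "cnbhd_set V E S = (\<Union>x\<in>S. cnbhd V E x)"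

definition dominating :: "'a set \<Rightarrow> ('a \<Rightarrow> 'a \<Rightarrow> bool) \<Rightarrow> 'a set \<Rightarrow> bool" where
  "dominating V E D \<longleftrightarrow> D \<subseteq> V \<and> cnbhd_set V E D = V"

definition avg_cong :: "'a set \<Rightarrow> ('a \<Rightarrow> 'a \<Rightarrow> bool) \<Rightarrow> 'a set \<Rightarrow> real" where
  "avg_cong V E S = (\<Sum>x\<in>V. real (card (cnbhd V E x \<inter> S))) / real (card V)"

definition mac :: "'a set \<Rightarrow> ('a \<Rightarrow> 'a \<Rightarrow> bool) \<Rightarrow> real" where
  "mac V E = Min (avg_cong V E ` {D. dominating V E D})"

text \<open>Reachable states of the algorithm Degree (any tie-breaking).\<close>
inductive degree_run :: "'a set \<Rightarrow> ('a \<Rightarrow> 'a \<Rightarrow> bool) \<Rightarrow> 'a set \<Rightarrow> bool"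
  for V E where
  start: "degree_run V E {}"
| step: "\<lbrakk> degree_run V E D; cnbhd_set V E D \<noteq> V; v \<in> V;
           \<forall>u\<in>V. card (cnbhd V E u - cnbhd_set V E D) \<le> card (cnbhd V E v - cnbhd_set V E D) \<rbrakk>
         \<Longrightarrow> degree_run V E (insert v D)"

definition degree_output :: "'a set \<Rightarrow> ('a \<Rightarrow> 'a \<Rightarrow> bool) \<Rightarrow> 'a set \<Rightarrow> bool" where
  "degree_output V E D \<longleftrightarrow> degree_run V E D \<and> cnbhd_set V E D = V"

text \<open>K_{k,k} with a pendant leaf on every vertex. A = {(0,i)}, B = {(1,i)},
  leaf of (0,i) is (2,i), leaf of (1,i) is (3,i), i < k.\<close>
definition sideA :: "nat \<Rightarrow> (nat \<times> nat) set" where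
  "sideA k = {(0, i) | i. i < k}"
definition sideB :: "nat \<Rightarrow> (nat \<times> nat) set" where
  "sideB k = {(1, i) | i. i < k}"
definition pbip_V :: "nat \<Rightarrow> (nat \<times> nat) set" where
  "pbip_V k = {(t, i) | t i. t < 4 \<and> i < k}"
definition pbip_E :: "nat \<Rightarrow> nat \<times> nat \<Rightarrow> nat \<times> nat \<Rightarrow> bool" where
  "pbip_E k x y \<longleftrightarrow> snd x < k \<and> snd y < k \<and>
     ( (fst x = 0 \<and> fst y = 1) \<or> (fst x = 1 \<and> fst y = 0)
     \<or> ({fst x, fst y} = {0, 2} \<and> snd x = snd y)
     \<or> ({fst x, fst y} = {1, 3} \<and> snd x = snd y))"

end

theory Submission
  imports Defs
begin

text \<open>By double counting, the average congestion of \<open>S\<close> is \<open>\<Sum>y\<in>S. |N[y]|\<close> divided by \<open>n\<close>.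
  In \<open>K\<^sub>k\<^sub>,\<^sub>k\<close> with pendant leaves, Degree may first take a vertex of \<open>A\<close> (gain \<open>k + 2\<close>) and
  then one of \<open>B\<close> (gain \<open>k\<close>). Now \<open>A \<union> B\<close> is covered, so every vertex has gain at most one,
  and each remaining vertex of \<open>A \<union> B\<close> still has gain one because it is the only vertex
  of \<open>A \<union> B\<close> covering its leaf; hence Degree may output \<open>A \<union> B\<close>, of congestion
  \<open>2k(k + 2)/4k = k/2 + 1\<close>. The leaves form a perfect code: every closed neighbourhood
  contains exactly one of them, so they have congestion 1, the least possible value for a
  dominating set. Relabelling the graph on \<open>nat\<close> turns this into an unbounded ratio.\<close>

lemma cnbhd_subset: "cnbhd V E x \<subseteq> V"
  by (auto simp: cnbhd_def)

lemma cnbhd_set_subset: "cnbhd_set V E S \<subseteq> V"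
  by (auto simp: cnbhd_set_def cnbhd_def)

lemma mem_cnbhd_set_iff: "x \<in> cnbhd_set V E S \<longleftrightarrow> (\<exists>d\<in>S. x \<in> cnbhd V E d)"
  by (auto simp: cnbhd_set_def)

lemma cnbhd_set_eqI: "(\<And>y. y \<in> V \<Longrightarrow> \<exists>d\<in>S. y \<in> cnbhd V E d) \<Longrightarrow> cnbhd_set V E S = V"
  using cnbhd_set_subset[of V E S] by (auto simp: mem_cnbhd_set_iff)

lemma finite_cnbhd: "graph V E \<Longrightarrow> finite (cnbhd V E x)"
  using cnbhd_subset finite_subset unfolding graph_def by metis

lemma mem_cnbhd_commute:
  assumes "graph V E" "x \<in> V"
  shows "y \<in> cnbhd V E x \<longleftrightarrow> x \<in> cnbhd V E y"
  using assms by (auto simp: cnbhd_def graph_def)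

lemma degree_run_subset: "degree_run V E D \<Longrightarrow> D \<subseteq> V"
  by (induction rule: degree_run.induct) auto

lemma sum_card_cnbhd_Int:
  assumes g: "graph V E" and S: "S \<subseteq> V"
  shows "(\<Sum>x\<in>V. card (cnbhd V E x \<inter> S)) = (\<Sum>y\<in>S. card (cnbhd V E y))"
proof -
  have V: "finite V" using g by (simp add: graph_def)
  then have "finite S" using S finite_subset by blast
  then have "(\<Sum>x\<in>V. card (cnbhd V E x \<inter> S))
      = (\<Sum>x\<in>V. \<Sum>y\<in>S. if y \<in> cnbhd V E x then 1 else 0)"
    by (simp add: sum.If_cases Int_commute)
  also have "\<dots> = (\<Sum>y\<in>S. \<Sum>x\<in>V. if y \<in> cnbhd V E x then 1 else 0)"
    by (rule sum.swap)
  also have "\<dots> = (\<Sum>y\<in>S. \<Sum>x\<in>V. if x \<in> cnbhd V E y then 1 else 0)"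
    by (intro sum.cong refl) (use mem_cnbhd_commute[OF g] in auto)
  also have "\<dots> = (\<Sum>y\<in>S. card (cnbhd V E y))"
    using V by (simp add: sum.If_cases Int_absorb1[OF cnbhd_subset])
  finally show ?thesis .
qed

lemma avg_cong_eq_sum_card_cnbhd:
  assumes "graph V E" "S \<subseteq> V"
  shows "avg_cong V E S = (\<Sum>y\<in>S. real (card (cnbhd V E y))) / real (card V)"
  unfolding avg_cong_def using sum_card_cnbhd_Int[OF assms]
  by (metis (no_types, lifting) of_nat_sum sum.cong)

lemma avg_cong_dominating_ge_1:
  assumes g: "graph V E" and ne: "V \<noteq> {}" and D: "dominating V E D"
  shows "avg_cong V E D \<ge> 1"
proof -
  have fin: "finite V" using g by (simp add: graph_def)
  have "1 \<le> card (cnbhd V E x \<inter> D)" if x: "x \<in> V" for x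
  proof -
    from x D have "x \<in> cnbhd_set V E D" by (simp add: dominating_def)
    then obtain y where y: "y \<in> D" "x \<in> cnbhd V E y" by (auto simp: mem_cnbhd_set_iff)
    then have "y \<in> cnbhd V E x \<inter> D" using mem_cnbhd_commute[OF g x] by simp
    then show ?thesis
      using finite_cnbhd[OF g] by (metis Suc_leI One_nat_def card_gt_0_iff empty_iff finite_Int)
  qed
  then have "real (card V) \<le> (\<Sum>x\<in>V. real (card (cnbhd V E x \<inter> D)))"
    using sum_mono[of V "\<lambda>_. 1::real"] by fastforce
  moreover have "card V > 0" using fin ne by (simp add: card_gt_0_iff)
  ultimately show ?thesis by (simp add: avg_cong_def)
qed

lemma finite_dominating_sets: "graph V E \<Longrightarrow> finite {D. dominating V E D}"
  by (rule finite_subset[of _ "Pow V"]) (auto simp: dominating_def graph_def)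

lemma mac_le_avg_cong: "graph V E \<Longrightarrow> dominating V E D \<Longrightarrow> mac V E \<le> avg_cong V E D"
  unfolding mac_def by (intro Min_le) (auto simp: finite_dominating_sets)

lemma mac_eq_1:
  assumes g: "graph V E" and "V \<noteq> {}" and "dominating V E D" and "avg_cong V E D = 1"
  shows "mac V E = 1"
  unfolding mac_def
proof (rule Min_eqI)
  show "finite (avg_cong V E ` {D. dominating V E D})"
    using finite_dominating_sets[OF g] by simp
  show "1 \<in> avg_cong V E ` {D. dominating V E D}"
    using assms(3,4) by (metis image_eqI mem_Collect_eq)
qed (use assms(2) avg_cong_dominating_ge_1[OF g] in auto)

definition gain :: "'a set \<Rightarrow> ('a \<Rightarrow> 'a \<Rightarrow> bool) \<Rightarrow> 'a set \<Rightarrow> 'a \<Rightarrow> nat" where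
  "gain V E D v = card (cnbhd V E v - cnbhd_set V E D)"

lemma degree_run_greedy_step:
  "\<lbrakk>degree_run V E D; cnbhd_set V E D \<noteq> V; v \<in> V; \<forall>u\<in>V. gain V E D u \<le> gain V E D v\<rbrakk>
   \<Longrightarrow> degree_run V E (insert v D)"
  by (rule degree_run.step) (simp_all add: gain_def)

lemma gain_empty: "gain V E {} u = card (cnbhd V E u)"
  by (simp add: gain_def cnbhd_set_def)

lemma gain_antimono:
  assumes "graph V E" "D \<subseteq> D'"
  shows "gain V E D' u \<le> gain V E D u"
  unfolding gain_def using assms finite_cnbhd[OF assms(1), of u]
  by (intro card_mono) (auto simp: cnbhd_set_def)

lemma gain_le_card_cnbhd: "graph V E \<Longrightarrow> gain V E D u \<le> card (cnbhd V E u)"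
  using gain_antimono[of V E "{}" D u] by (simp add: gain_empty)

text \<open>When all gains are at most one, a vertex of \<open>S\<close> not yet chosen still has gain one thanks
  to its private neighbour, so it is a legal greedy choice.\<close>
lemma degree_run_add_private:
  assumes g: "graph V E" and run: "degree_run V E D"
    and S: "finite S" "S \<subseteq> V" "S \<inter> D = {}"
    and gain_le_1: "\<forall>u\<in>V. gain V E D u \<le> 1"
    and private_nbr: "\<forall>x\<in>S. \<exists>p\<in>cnbhd V E x. \<forall>y\<in>D \<union> S. p \<in> cnbhd V E y \<longrightarrow> y = x"
  shows "degree_run V E (D \<union> S)"
  using S private_nbr
proof (induction S rule: finite_induct)
  case empty
  then show ?case using run by simp
next
  case (insert x F)
  let ?D = "D \<union> F"
  have run_D: "degree_run V E ?D"
  proof (rule insert.IH)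
    show "\<forall>x'\<in>F. \<exists>p\<in>cnbhd V E x'. \<forall>y\<in>D \<union> F. p \<in> cnbhd V E y \<longrightarrow> y = x'"
      using insert.prems(3) by blast
  qed (use insert.prems in auto)
  obtain p where p: "p \<in> cnbhd V E x" "\<forall>y\<in>D \<union> insert x F. p \<in> cnbhd V E y \<longrightarrow> y = x"
    using insert.prems by auto
  have x: "x \<in> V" "x \<notin> ?D" using insert by auto
  have p_new: "p \<in> cnbhd V E x - cnbhd_set V E ?D"
    using p x(2) by (auto simp: mem_cnbhd_set_iff)
  then have "cnbhd_set V E ?D \<noteq> V" using cnbhd_subset[of V E x] by blast
  moreover have "gain V E ?D u \<le> gain V E ?D x" if "u \<in> V" for u
  proof -
    have "gain V E ?D u \<le> 1"
      using gain_antimono[OF g, of D ?D u] gain_le_1 that by fastforce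
    moreover have "gain V E ?D x \<ge> 1"
      using p_new finite_cnbhd[OF g, of x] unfolding gain_def
      by (metis Suc_leI One_nat_def card_gt_0_iff empty_iff finite_Diff)
    ultimately show ?thesis by simp
  qed
  ultimately have "degree_run V E (insert x ?D)"
    using degree_run_greedy_step[OF run_D] x(1) by blast
  then show ?case by simp
qed

definition map_edges :: "('a \<Rightarrow> 'b) \<Rightarrow> ('a \<Rightarrow> 'a \<Rightarrow> bool) \<Rightarrow> 'b \<Rightarrow> 'b \<Rightarrow> bool" where
  "map_edges f E x y \<longleftrightarrow> (\<exists>a b. x = f a \<and> y = f b \<and> E a b)"

locale graph_embedding =
  fixes V :: "'a set" and E :: "'a \<Rightarrow> 'a \<Rightarrow> bool" and f :: "'a \<Rightarrow> 'b"
  assumes graph: "graph V E" and inj: "inj_on f V"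
begin

lemma graph_image: "graph (f ` V) (map_edges f E)"
  using graph unfolding graph_def map_edges_def
  by (auto dest: inj_onD[OF inj]) blast

lemma cnbhd_image: "x \<in> V \<Longrightarrow> cnbhd (f ` V) (map_edges f E) (f x) = f ` cnbhd V E x"
  using graph unfolding cnbhd_def map_edges_def graph_def
  by (auto dest: inj_onD[OF inj])

lemma cnbhd_set_image: "S \<subseteq> V \<Longrightarrow> cnbhd_set (f ` V) (map_edges f E) (f ` S) = f ` cnbhd_set V E S"
  unfolding cnbhd_set_def by (auto simp: cnbhd_image subset_iff)

lemma card_image_subset: "X \<subseteq> V \<Longrightarrow> card (f ` X) = card X"
  using inj by (meson card_image inj_on_subset)

lemma gain_image:
  assumes D: "D \<subseteq> V" and x: "x \<in> V"
  shows "gain (f ` V) (map_edges f E) (f ` D) (f x) = gain V E D x"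
proof -
  have "f ` cnbhd V E x - f ` cnbhd_set V E D = f ` (cnbhd V E x - cnbhd_set V E D)"
    using cnbhd_subset[of V E x] by (intro inj_on_image_set_diff[OF inj, symmetric] cnbhd_set_subset) blast
  moreover have "cnbhd V E x - cnbhd_set V E D \<subseteq> V"
    using cnbhd_subset[of V E x] by blast
  ultimately show ?thesis
    unfolding gain_def cnbhd_image[OF x] cnbhd_set_image[OF D] by (simp add: card_image_subset)
qed

lemma degree_run_image: "degree_run V E D \<Longrightarrow> degree_run (f ` V) (map_edges f E) (f ` D)"
proof (induction rule: degree_run.induct)
  case start
  then show ?case by (simp add: degree_run.start)
next
  case (step D v)
  have D: "D \<subseteq> V" using step.hyps(1) by (rule degree_run_subset)
  have "cnbhd_set (f ` V) (map_edges f E) (f ` D) \<noteq> f ` V"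
    using step.hyps(2) cnbhd_set_image[OF D] inj cnbhd_set_subset
    by (metis inj_on_image_eq_iff order_refl)
  moreover have "\<forall>u\<in>f ` V. gain (f ` V) (map_edges f E) (f ` D) u \<le> gain (f ` V) (map_edges f E) (f ` D) (f v)"
    using step.hyps(3,4) gain_image[OF D] by (auto simp: gain_def[symmetric])
  ultimately show ?case
    using degree_run_greedy_step[OF step.IH] step.hyps(3) by (metis image_eqI image_insert)
qed

lemma degree_output_image: "degree_output V E D \<Longrightarrow> degree_output (f ` V) (map_edges f E) (f ` D)"
  unfolding degree_output_def
  using degree_run_image cnbhd_set_image degree_run_subset by metis

lemma dominating_image: "dominating V E D \<Longrightarrow> dominating (f ` V) (map_edges f E) (f ` D)"
  unfolding dominating_def using cnbhd_set_image by auto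

lemma avg_cong_image:
  assumes "S \<subseteq> V"
  shows "avg_cong (f ` V) (map_edges f E) (f ` S) = avg_cong V E S"
proof -
  have "(\<Sum>y\<in>f ` S. real (card (cnbhd (f ` V) (map_edges f E) y)))
      = (\<Sum>y\<in>S. real (card (cnbhd V E y)))"
    using assms by (simp add: sum.reindex inj_on_subset[OF inj] cnbhd_image subset_iff
        card_image_subset[OF cnbhd_subset])
  then show ?thesis
    using assms by (simp add: avg_cong_eq_sum_card_cnbhd graph graph_image image_mono
        card_image_subset)
qed

end

lemma mem_pbip_V [simp]: "(t, i) \<in> pbip_V k \<longleftrightarrow> t < 4 \<and> i < k"
  by (auto simp: pbip_V_def)

lemma mem_sideA [simp]: "(t, i) \<in> sideA k \<longleftrightarrow> t = 0 \<and> i < k"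
  by (auto simp: sideA_def)

lemma mem_sideB [simp]: "(t, i) \<in> sideB k \<longleftrightarrow> t = 1 \<and> i < k"
  by (auto simp: sideB_def)

lemma pbip_V_eq: "pbip_V k = {..<4} \<times> {..<k}"
  by auto

lemma sides_eq: "sideA k \<union> sideB k = {..<2} \<times> {..<k}"
  by auto

lemma finite_sideA [simp]: "finite (sideA k)" and finite_sideB [simp]: "finite (sideB k)"
  by (rule finite_subset[of _ "{..<2} \<times> {..<k}"], auto)+

lemma card_sideA: "card (sideA k) = k"
proof -
  have "sideA k = Pair 0 ` {..<k}" by auto
  then show ?thesis by (simp add: card_image inj_on_def)
qed

lemma card_sideB: "card (sideB k) = k"
proof -
  have "sideB k = Pair 1 ` {..<k}" by auto
  then show ?thesis by (simp add: card_image inj_on_def)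
qed

lemma card_pbip_V: "card (pbip_V k) = 4 * k"
  by (simp add: pbip_V_eq card_cartesian_product)

lemma pbip_V_cases:
  assumes "x \<in> pbip_V k"
  obtains (A) i where "i < k" "x = (0, i)" | (B) i where "i < k" "x = (1, i)"
    | (leafA) i where "i < k" "x = (2, i)" | (leafB) i where "i < k" "x = (3, i)"
  using assms by (cases x) (auto simp: less_Suc_eq numeral_eq_Suc)

lemma pbip_E_iff:
  "pbip_E k (t, i) (s, j) \<longleftrightarrow> i < k \<and> j < k \<and>
     (t = 0 \<and> s = 1 \<or> t = 1 \<and> s = 0 \<or> i = j \<and>
       (t = 0 \<and> s = 2 \<or> t = 2 \<and> s = 0 \<or> t = 1 \<and> s = 3 \<or> t = 3 \<and> s = 1))"
  unfolding pbip_E_def by (simp add: doubleton_eq_iff) arith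

lemma graph_pbip: "graph (pbip_V k) (pbip_E k)"
  unfolding graph_def pbip_V_eq by (auto simp: pbip_E_iff)

lemma cnbhd_pbip_A: "i < k \<Longrightarrow> cnbhd (pbip_V k) (pbip_E k) (0, i) = insert (0, i) (insert (2, i) (sideB k))"
  and cnbhd_pbip_B: "i < k \<Longrightarrow> cnbhd (pbip_V k) (pbip_E k) (1, i) = insert (1, i) (insert (3, i) (sideA k))"
  and cnbhd_pbip_leafA: "i < k \<Longrightarrow> cnbhd (pbip_V k) (pbip_E k) (2, i) = {(2, i), (0, i)}"
  and cnbhd_pbip_leafB: "i < k \<Longrightarrow> cnbhd (pbip_V k) (pbip_E k) (3, i) = {(3, i), (1, i)}"
  by (auto simp: cnbhd_def pbip_E_iff)

lemma card_cnbhd_pbip: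
  assumes "x \<in> pbip_V k"
  shows "card (cnbhd (pbip_V k) (pbip_E k) x) = (if fst x < 2 then k + 2 else 2)"
  using assms
  by (cases rule: pbip_V_cases)
     (simp_all del: One_nat_def add: cnbhd_pbip_A cnbhd_pbip_B cnbhd_pbip_leafA cnbhd_pbip_leafB
        card_sideA card_sideB)

lemma degree_run_pbip_first:
  assumes "k \<ge> 1"
  shows "degree_run (pbip_V k) (pbip_E k) {(0, 0)}"
proof (rule degree_run_greedy_step[OF degree_run.start])
  show "(0, 0) \<in> pbip_V k" using assms by simp
  moreover have "cnbhd_set (pbip_V k) (pbip_E k) {} = {}" by (simp add: cnbhd_set_def)
  ultimately show "cnbhd_set (pbip_V k) (pbip_E k) {} \<noteq> pbip_V k" by blast
qed (use assms in \<open>simp add: gain_empty card_cnbhd_pbip\<close>)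

lemma gain_pbip_B_after_first:
  assumes "i < k"
  shows "gain (pbip_V k) (pbip_E k) {(0, 0)} (1, i) = k"
proof -
  have "cnbhd (pbip_V k) (pbip_E k) (1, i) - cnbhd_set (pbip_V k) (pbip_E k) {(0, 0)}
      = insert (3, i) (sideA k - {(0, 0)})"
    unfolding cnbhd_pbip_B[OF assms] using assms by (auto simp: cnbhd_set_def cnbhd_pbip_A)
  then show ?thesis using assms by (simp add: gain_def card_sideA)
qed

lemma gain_pbip_after_first_le:
  assumes "k \<ge> 2" "u \<in> pbip_V k"
  shows "gain (pbip_V k) (pbip_E k) {(0, 0)} u \<le> k"
  using assms(2)
proof (cases rule: pbip_V_cases)
  case (A i)
  have "cnbhd (pbip_V k) (pbip_E k) u - cnbhd_set (pbip_V k) (pbip_E k) {(0, 0)} \<subseteq> {(0, i), (2, i)}"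
    using A by (auto simp: cnbhd_set_def cnbhd_pbip_A)
  then have "gain (pbip_V k) (pbip_E k) {(0, 0)} u \<le> card {(0::nat, i), (2, i)}"
    unfolding gain_def by (rule card_mono[rotated]) simp
  then show ?thesis using assms(1) by simp
next
  case (B i)
  then show ?thesis using gain_pbip_B_after_first by simp
qed (use assms gain_le_card_cnbhd[OF graph_pbip, of k "{(0, 0)}" u] card_cnbhd_pbip in fastforce)+

lemma degree_run_pbip_first_two:
  assumes "k \<ge> 2"
  shows "degree_run (pbip_V k) (pbip_E k) {(1, 0), (0, 0)}"
proof (rule degree_run_greedy_step[OF degree_run_pbip_first])
  have "(3, 0) \<notin> cnbhd_set (pbip_V k) (pbip_E k) {(0, 0)}"
    using assms by (simp add: cnbhd_set_def cnbhd_pbip_A)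
  then show "cnbhd_set (pbip_V k) (pbip_E k) {(0, 0)} \<noteq> pbip_V k"
    using assms by force
  have "gain (pbip_V k) (pbip_E k) {(0, 0)} (1, 0) = k"
    using assms gain_pbip_B_after_first[of 0 k] by simp
  then show "\<forall>u\<in>pbip_V k. gain (pbip_V k) (pbip_E k) {(0, 0)} u \<le> gain (pbip_V k) (pbip_E k) {(0, 0)} (1, 0)"
    using gain_pbip_after_first_le[OF assms] by simp
qed (use assms in simp_all)

lemma sides_subset_cnbhd_set_pbip:
  "k \<ge> 1 \<Longrightarrow> sideA k \<union> sideB k \<subseteq> cnbhd_set (pbip_V k) (pbip_E k) {(1, 0), (0, 0)}"
  by (auto simp: cnbhd_set_def cnbhd_def pbip_E_iff)

lemma gain_pbip_after_first_two_le_1: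
  assumes "k \<ge> 1" "u \<in> pbip_V k"
  shows "gain (pbip_V k) (pbip_E k) {(1, 0), (0, 0)} u \<le> 1"
proof -
  obtain t i where u: "u = (t, i)" by force
  \<comment> \<open>\<open>(t mod 2 + 2, i)\<close> is the leaf in the closed neighbourhood of \<open>(t, i)\<close>\<close>
  have "cnbhd (pbip_V k) (pbip_E k) u - (sideA k \<union> sideB k) \<subseteq> {(t mod 2 + 2, i)}"
    using assms(2) unfolding u by (auto simp: cnbhd_def pbip_E_iff; presburger)
  then have "cnbhd (pbip_V k) (pbip_E k) u - cnbhd_set (pbip_V k) (pbip_E k) {(1, 0), (0, 0)}
      \<subseteq> {(t mod 2 + 2, i)}"
    using sides_subset_cnbhd_set_pbip[OF assms(1)] by blast
  then show ?thesis
    unfolding gain_def using card_mono[of "{(t mod 2 + 2, i)}"] by fastforce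
qed

lemma degree_output_pbip_sides:
  assumes "k \<ge> 2"
  shows "degree_output (pbip_V k) (pbip_E k) (sideA k \<union> sideB k)"
proof -
  let ?D = "{(1, 0), (0, 0)}" and ?S = "sideA k \<union> sideB k - {(1, 0), (0, 0)}"
  have "degree_run (pbip_V k) (pbip_E k) (?D \<union> ?S)"
  proof (rule degree_run_add_private[OF graph_pbip degree_run_pbip_first_two[OF assms]])
    show "finite ?S" by simp
    show "?S \<subseteq> pbip_V k" "?S \<inter> ?D = {}" by auto
    show "\<forall>u\<in>pbip_V k. gain (pbip_V k) (pbip_E k) ?D u \<le> 1"
      using assms gain_pbip_after_first_two_le_1 by simp
    show "\<forall>x\<in>?S. \<exists>p\<in>cnbhd (pbip_V k) (pbip_E k) x. \<forall>y\<in>?D \<union> ?S. p \<in> cnbhd (pbip_V k) (pbip_E k) y \<longrightarrow> y = x"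
    proof
      fix x assume "x \<in> ?S"
      then obtain t i where x: "x = (t, i)" "t < 2" "i < k" by (cases x) auto
      show "\<exists>p\<in>cnbhd (pbip_V k) (pbip_E k) x. \<forall>y\<in>?D \<union> ?S. p \<in> cnbhd (pbip_V k) (pbip_E k) y \<longrightarrow> y = x"
        by (rule bexI[of _ "(t + 2, i)"]) (use x in \<open>auto simp: cnbhd_def pbip_E_iff\<close>)
    qed
  qed
  moreover have "?D \<union> ?S = sideA k \<union> sideB k" using assms by auto
  moreover have "cnbhd_set (pbip_V k) (pbip_E k) (sideA k \<union> sideB k) = pbip_V k"
  proof (rule cnbhd_set_eqI)
    fix y assume "y \<in> pbip_V k"
    then obtain t i where y: "y = (t, i)" "t < 4" "i < k" by (cases y) auto
    then have "y \<in> cnbhd (pbip_V k) (pbip_E k) (t mod 2, i)"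
      by (auto simp: cnbhd_def pbip_E_iff; presburger)
    then show "\<exists>d\<in>sideA k \<union> sideB k. y \<in> cnbhd (pbip_V k) (pbip_E k) d"
      using y by (auto intro!: bexI[of _ "(t mod 2, i)"])
  qed
  ultimately show ?thesis by (simp add: degree_output_def)
qed

lemma avg_cong_pbip_sides:
  assumes "k \<ge> 1"
  shows "avg_cong (pbip_V k) (pbip_E k) (sideA k \<union> sideB k) = real (card (pbip_V k)) / 8 + 1"
proof -
  have sides: "sideA k \<union> sideB k \<subseteq> pbip_V k" by auto
  have "(\<Sum>y\<in>sideA k \<union> sideB k. real (card (cnbhd (pbip_V k) (pbip_E k) y)))
      = (\<Sum>y\<in>sideA k \<union> sideB k. real k + 2)"
    by (intro sum.cong refl) (auto simp: card_cnbhd_pbip)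
  also have "\<dots> = 2 * real k * (real k + 2)"
    by (simp add: sides_eq card_cartesian_product)
  finally show ?thesis
    using assms by (simp add: avg_cong_eq_sum_card_cnbhd[OF graph_pbip sides] card_pbip_V field_simps)
qed

definition pbip_leaves :: "nat \<Rightarrow> (nat \<times> nat) set" where
  "pbip_leaves k = {2, 3} \<times> {..<k}"

lemma dominating_pbip_leaves: "dominating (pbip_V k) (pbip_E k) (pbip_leaves k)"
  unfolding dominating_def
proof
  show "pbip_leaves k \<subseteq> pbip_V k" by (auto simp: pbip_leaves_def)
  show "cnbhd_set (pbip_V k) (pbip_E k) (pbip_leaves k) = pbip_V k"
  proof (rule cnbhd_set_eqI)
    fix y assume "y \<in> pbip_V k"
    then obtain t i where y: "y = (t, i)" "t < 4" "i < k" by (cases y) auto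
    then have "y \<in> cnbhd (pbip_V k) (pbip_E k) (t mod 2 + 2, i)"
      by (auto simp: cnbhd_def pbip_E_iff; presburger)
    moreover have "(t mod 2 + 2, i) \<in> pbip_leaves k"
      using y by (auto simp: pbip_leaves_def; presburger)
    ultimately show "\<exists>d\<in>pbip_leaves k. y \<in> cnbhd (pbip_V k) (pbip_E k) d" by blast
  qed
qed

lemma avg_cong_pbip_leaves:
  assumes "k \<ge> 1"
  shows "avg_cong (pbip_V k) (pbip_E k) (pbip_leaves k) = 1"
proof -
  have leaves: "pbip_leaves k \<subseteq> pbip_V k" by (auto simp: pbip_leaves_def)
  have "(\<Sum>y\<in>pbip_leaves k. real (card (cnbhd (pbip_V k) (pbip_E k) y))) = (\<Sum>y\<in>pbip_leaves k. 2)"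
    by (intro sum.cong refl) (auto simp: pbip_leaves_def card_cnbhd_pbip)
  also have "\<dots> = 4 * real k"
    by (simp add: pbip_leaves_def card_cartesian_product)
  finally show ?thesis
    using assms by (simp add: avg_cong_eq_sum_card_cnbhd[OF graph_pbip leaves] card_pbip_V)
qed

lemma mac_pbip:
  assumes "k \<ge> 1"
  shows "mac (pbip_V k) (pbip_E k) = 1"
proof (rule mac_eq_1[OF graph_pbip _ dominating_pbip_leaves avg_cong_pbip_leaves[OF assms]])
  have "(0, 0) \<in> pbip_V k" using assms by simp
  then show "pbip_V k \<noteq> {}" by blast
qed

lemma inj_on_pbip_encode: "inj_on (\<lambda>(t, i). 4 * i + t) (pbip_V k)"
  by (auto simp: inj_on_def) presburger+

lemma degree_ratio_unbounded:
  fixes c :: real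
  assumes "c \<ge> 1"
  shows "\<exists>(V :: nat set) E D. graph V E \<and> degree_output V E D \<and> avg_cong V E D > c * mac V E"
proof -
  define k where "k = nat \<lceil>2 * c\<rceil> + 2"
  have k: "k \<ge> 2" by (simp add: k_def)
  have c_lt: "c < real k / 2 + 1"
    unfolding k_def using real_nat_ceiling_ge[of "2 * c"] by (simp add: field_simps)
  define f :: "nat \<times> nat \<Rightarrow> nat" where "f = (\<lambda>(t, i). 4 * i + t)"
  interpret graph_embedding "pbip_V k" "pbip_E k" f
    by unfold_locales (simp_all add: graph_pbip inj_on_pbip_encode f_def)
  have sides: "sideA k \<union> sideB k \<subseteq> pbip_V k" and leaves: "pbip_leaves k \<subseteq> pbip_V k"
    by (auto simp: pbip_leaves_def)
  have "mac (f ` pbip_V k) (map_edges f (pbip_E k)) \<le> 1"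
    using mac_le_avg_cong[OF graph_image dominating_image[OF dominating_pbip_leaves]]
      avg_cong_image[OF leaves] avg_cong_pbip_leaves k by simp
  then have "c * mac (f ` pbip_V k) (map_edges f (pbip_E k)) \<le> c"
    using assms by (intro mult_left_le) simp_all
  also have "\<dots> < real k / 2 + 1" by (rule c_lt)
  also have "real k / 2 + 1 = avg_cong (f ` pbip_V k) (map_edges f (pbip_E k)) (f ` (sideA k \<union> sideB k))"
    using avg_cong_image[OF sides] avg_cong_pbip_sides k by (simp add: card_pbip_V)
  finally show ?thesis
    using graph_image degree_output_image[OF degree_output_pbip_sides[OF k]] by blast
qed

theorem mainTheorem7:
  shows "(\<forall>c::real. c \<ge> 1 \<longrightarrow>
            (\<exists>(V :: nat set) E D. graph V E \<and> degree_output V E D \<and> avg_cong V E D > c * mac V E))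
       \<and> (\<forall>k::nat. k \<ge> 2 \<longrightarrow>
            graph (pbip_V k) (pbip_E k) \<and> card (pbip_V k) = 4 * k
          \<and> degree_output (pbip_V k) (pbip_E k) (sideA k \<union> sideB k)
          \<and> avg_cong (pbip_V k) (pbip_E k) (sideA k \<union> sideB k) = real (card (pbip_V k)) / 8 + 1
          \<and> mac (pbip_V k) (pbip_E k) = 1)"
  using degree_ratio_unbounded graph_pbip card_pbip_V degree_output_pbip_sides
    avg_cong_pbip_sides mac_pbip
  by simp

end
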